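(* Let $A$ be a $3$-dimensional zeropotent algebra over a field $K$ with $\mathrm{char}(K)\neq2$ whose structural matrix has rank at least $2$. Then every weak multiplier of $A$ is a scalar multiplication $S_a:x\mapsto ax$ for some $a\in K$; that is, $M(A)=M'(A)=LM(A)=LM'(A)=\{S_a: a\in K\}$.
   Context: $A$ is zeropotent if $x^2=0$ for all $x\in A$. Given a basis $\{e,f,g\}$, write $fg=a_{11}e+a_{12}f+a_{13}g$, $ge=a_{21}e+a_{22}f+a_{23}g$, $ef=a_{31}e+a_{32}f+a_{33}g$; the structural matrix is $(a_{ij})$ (rank $\ge 2$ means at least two of $fg,ge,ef$ are linearly independent). A map $T:A\to A$ (not assumed linear) is a weak multiplier if $xT(y)=T(x)y$ for all $x,y$, a multiplier if $xT(y)=T(xy)=T(x)y$ for all $x,y$; $M(A)$, $M'(A)$ are the sets of multipliers and weak multipliers and $LM(A)$, $LM'(A)$ their linear elements. *)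

theory Defs
  imports "HOL-Analysis.Finite_Cartesian_Product"
begin

text \<open>A 3-dimensional algebra over a field K is modelled as K^3 (coordinates w.r.t. the
basis e = axis 1 1, f = axis 2 1, g = axis 3 1) with a K-bilinear product prd.\<close>

definition bilinear_prod :: "('k::field ^ 3 \<Rightarrow> 'k ^ 3 \<Rightarrow> 'k ^ 3) \<Rightarrow> bool" where
  "bilinear_prod prd \<longleftrightarrow>
     (\<forall>x y z. prd (x + y) z = prd x z + prd y z) \<and>
     (\<forall>x y z. prd x (y + z) = prd x y + prd x z) \<and>
     (\<forall>c x y. prd (c *s x) y = c *s prd x y) \<and>
     (\<forall>c x y. prd x (c *s y) = c *s prd x y)"

definition zeropotent :: "('k::field ^ 3 \<Rightarrow> 'k ^ 3 \<Rightarrow> 'k ^ 3) \<Rightarrow> bool" where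
  "zeropotent prd \<longleftrightarrow> (\<forall>x. prd x x = 0)"

definition lin_indep2 :: "'k::field ^ 3 \<Rightarrow> 'k ^ 3 \<Rightarrow> bool" where
  "lin_indep2 u v \<longleftrightarrow> (\<forall>a b. a *s u + b *s v = 0 \<longrightarrow> a = 0 \<and> b = 0)"

text \<open>Structural matrix has rank at least 2: at least two of fg, ge, ef are linearly independent.\<close>
definition struct_rank_ge2 :: "('k::field ^ 3 \<Rightarrow> 'k ^ 3 \<Rightarrow> 'k ^ 3) \<Rightarrow> bool" where
  "struct_rank_ge2 prd \<longleftrightarrow>
     (let e = axis 1 1; f = axis 2 1; g = axis 3 1 in
       lin_indep2 (prd f g) (prd g e) \<or> lin_indep2 (prd f g) (prd e f) \<or>
       lin_indep2 (prd g e) (prd e f))"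

definition weak_multiplier :: "('a \<Rightarrow> 'a \<Rightarrow> 'a) \<Rightarrow> ('a \<Rightarrow> 'a) \<Rightarrow> bool" where
  "weak_multiplier prd T \<longleftrightarrow> (\<forall>x y. prd x (T y) = prd (T x) y)"

definition multiplier :: "('a \<Rightarrow> 'a \<Rightarrow> 'a) \<Rightarrow> ('a \<Rightarrow> 'a) \<Rightarrow> bool" where
  "multiplier prd T \<longleftrightarrow> (\<forall>x y. prd x (T y) = T (prd x y) \<and> T (prd x y) = prd (T x) y)"

definition M_set where "M_set prd = {T. multiplier prd T}"
definition M'_set where "M'_set prd = {T. weak_multiplier prd T}"
definition LM_set :: "('k::field ^ 3 \<Rightarrow> 'k ^ 3 \<Rightarrow> 'k ^ 3) \<Rightarrow> ('k ^ 3 \<Rightarrow> 'k ^ 3) set" where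
  "LM_set prd = {T. multiplier prd T \<and> Vector_Spaces.linear (*s) (*s) T}"
definition LM'_set :: "('k::field ^ 3 \<Rightarrow> 'k ^ 3 \<Rightarrow> 'k ^ 3) \<Rightarrow> ('k ^ 3 \<Rightarrow> 'k ^ 3) set" where
  "LM'_set prd = {T. weak_multiplier prd T \<and> Vector_Spaces.linear (*s) (*s) T}"

end

theory Submission
  imports Defs "HOL-Analysis.Cartesian_Space"
begin

text \<open>A zeropotent product is anticommutative, so x y is determined by the vectors fg, ge, ef
  (the rows of the structural matrix). Two of them being independent makes the annihilator
  {z. \<forall>x. x z = 0} trivial. For a weak multiplier T and char K \<noteq> 2 one gets x T(x) = 0 and
  x T(y) = - y T(x); evaluated on basis vectors and read off in the two independent rows, these
  equations force T to act on the basis as a scalar a. Then T x - a x lies in the annihilator,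
  so T is the scalar multiplication by a, which is a linear multiplier.\<close>

lemma multiplier_imp_weak_multiplier: "multiplier prd T \<Longrightarrow> weak_multiplier prd T"
  unfolding multiplier_def weak_multiplier_def by metis

lemma lin_indep2_swap: "lin_indep2 u v \<longleftrightarrow> lin_indep2 v u"
  unfolding lin_indep2_def by (metis add.commute)

lemma lin_indep2_eqD:
  assumes "lin_indep2 u v" and "a *s u = b *s v"
  shows "a = 0" and "b = 0"
  using assms unfolding lin_indep2_def
  by (metis (no_types) add_eq_0_iff vector_sneg_minus1 vector_smult_assoc)+

lemma exhaust_3_cyclic: "(k::3) = i \<or> k = i + 1 \<or> k = i + 2"
  using exhaust_3[of i] exhaust_3[of k] by auto

lemma add_3_cyclic:
  "(i::3) + 1 + 1 = i + 2" "i + 1 + 2 = i" "i + 2 + 1 = i" "i + 2 + 2 = i + 1"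
  by simp_all

lemma vec_3_decomp_axes: "(y::'a::field^3) = y$i *s axis i 1 + y$(i+1) *s axis (i+1) 1 + y$(i+2) *s axis (i+2) 1"
  by (simp add: vec_eq_iff axis_def) (metis exhaust_3_cyclic)

locale zeropotent_algebra3 =
  fixes prd :: "'k::field ^ 3 \<Rightarrow> 'k ^ 3 \<Rightarrow> 'k ^ 3"
  assumes bilinear: "bilinear_prod prd" and zeropotent: "zeropotent prd"
begin

lemma add_left: "prd (x + y) z = prd x z + prd y z"
  and add_right: "prd x (y + z) = prd x y + prd x z"
  and scale_left: "prd (c *s x) y = c *s prd x y"
  and scale_right: "prd x (c *s y) = c *s prd x y"
  using bilinear unfolding bilinear_prod_def by blast+

lemma square_eq_0: "prd x x = 0"
  using zeropotent unfolding zeropotent_def by blast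

lemma anticommute: "prd y x = - prd x y"
proof -
  have "0 = prd x x + prd x y + (prd y x + prd y y)"
    by (metis add_left add_right square_eq_0)
  then show ?thesis by (simp add: square_eq_0 eq_neg_iff_add_eq_0 add.commute)
qed

lemma diff_right: "prd x (y - z) = prd x y - prd x z"
  by (metis add_right eq_diff_eq)

text \<open>Indices live in the cyclic type 3, so structural_row 1, 2, 3 are fg, ge, ef.\<close>

definition structural_row :: "3 \<Rightarrow> 'k ^ 3" where
  "structural_row i = prd (axis (i + 1) 1) (axis (i + 2) 1)"

lemma prd_axis_left:
  "prd (axis i 1) y = y$(i+1) *s structural_row (i+2) - y$(i+2) *s structural_row (i+1)"
proof -
  have "prd (axis i 1) y = y$(i+1) *s prd (axis i 1) (axis (i+1) 1) + y$(i+2) *s prd (axis i 1) (axis (i+2) 1)"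
    by (subst vec_3_decomp_axes[of y i]) (simp add: add_right scale_right square_eq_0)
  also have "\<dots> = y$(i+1) *s structural_row (i+2) - y$(i+2) *s structural_row (i+1)"
    unfolding structural_row_def add_3_cyclic
    by (simp add: anticommute[of "axis i 1" "axis (i+2) 1"])
  finally show ?thesis .
qed

lemma weak_multiplier_antisym:
  assumes "weak_multiplier prd T"
  shows "prd x (T y) = - prd y (T x)"
  using assms anticommute unfolding weak_multiplier_def by metis

lemma weak_multiplier_annihilates_self:
  assumes "(2::'k) \<noteq> 0" and "weak_multiplier prd T"
  shows "prd x (T x) = 0"
proof -
  have "2 *s prd x (T x) = 0"
    using weak_multiplier_antisym[OF assms(2), of x x] by (simp add: vec_eq_iff)
  then show ?thesis using assms(1) by (simp add: vec_eq_iff)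
qed

lemma scalar_multiplier: "multiplier prd (\<lambda>x. a *s x)"
  unfolding multiplier_def by (simp add: scale_left scale_right)

end

locale zeropotent_algebra3_rank2 =
  zeropotent_algebra3 prd for prd :: "'k::field ^ 3 \<Rightarrow> 'k ^ 3 \<Rightarrow> 'k ^ 3" +
  assumes rank: "struct_rank_ge2 prd"
begin

lemma structural_rows_indep: "\<exists>i. lin_indep2 (structural_row i) (structural_row (i + 1))"
proof -
  have sums: "(1::3) + 1 = 2" "(1::3) + 2 = 3" "(2::3) + 1 = 3" "(2::3) + 2 = 1" "(3::3) + 1 = 1"
    "(3::3) + 2 = 2"
    by simp_all
  have "structural_row 1 = prd (axis 2 1) (axis 3 1)" "structural_row 2 = prd (axis 3 1) (axis 1 1)"
    "structural_row 3 = prd (axis 1 1) (axis 2 1)"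
    unfolding structural_row_def sums by (rule refl)+
  with rank have "lin_indep2 (structural_row 1) (structural_row 2) \<or> lin_indep2 (structural_row 3) (structural_row 1)
      \<or> lin_indep2 (structural_row 2) (structural_row 3)"
    unfolding struct_rank_ge2_def Let_def using lin_indep2_swap by metis
  then show ?thesis by (metis sums(1,3,5))
qed

lemma annihilator_eq_0:
  assumes "\<And>m. prd (axis m 1) z = 0"
  shows "z = 0"
proof -
  obtain i where indep: "lin_indep2 (structural_row i) (structural_row (i + 1))"
    using structural_rows_indep by blast
  have "z$(i+1) *s structural_row i = z$i *s structural_row (i + 1)"
    using assms[of "i + 2"] unfolding prd_axis_left add_3_cyclic by simp
  then have i: "z$i = 0" and i1: "z$(i+1) = 0"
    using lin_indep2_eqD[OF indep] by blast+
  have "0 *s structural_row i = z$(i+2) *s structural_row (i + 1)"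
    using assms[of i] i1 unfolding prd_axis_left by simp
  then have "z$(i+2) = 0"
    using lin_indep2_eqD[OF indep] by blast
  with i i1 have "z$k = 0" for k
    using exhaust_3_cyclic[of k i] by auto
  then show ?thesis by (simp add: vec_eq_iff)
qed

lemma weak_multiplier_on_axes:
  assumes two: "(2::'k) \<noteq> 0" and T: "weak_multiplier prd T"
  shows "\<exists>a. \<forall>m. T (axis m 1) = a *s axis m 1"
proof -
  obtain i where indep: "lin_indep2 (structural_row i) (structural_row (i + 1))"
    using structural_rows_indep by blast
  define p q r where "p = structural_row i" and "q = structural_row (i + 1)"
    and "r = structural_row (i + 2)"
  define t where "t m = T (axis m 1)" for m
  have prd_i: "prd (axis i 1) y = y$(i+1) *s r - y$(i+2) *s q"
    and prd_j: "prd (axis (i+1) 1) y = y$(i+2) *s p - y$i *s r"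
    and prd_k: "prd (axis (i+2) 1) y = y$i *s q - y$(i+1) *s p" for y
    unfolding p_def q_def r_def prd_axis_left add_3_cyclic by (rule refl)+
  note self = weak_multiplier_annihilates_self[OF two T, of "axis _ 1", folded t_def]
  note cross = weak_multiplier_antisym[OF T, of "axis _ 1" "axis _ 1", folded t_def]
  note coeffs = lin_indep2_eqD[OF indep, folded p_def q_def]
  \<comment> \<open>Using the entries already shown to vanish, r drops out of each equation below.\<close>
  have "t (i+2) $ (i+1) *s p = t (i+2) $ i *s q"
    using self[of "i+2"] unfolding prd_k by simp
  then have k_i: "t (i+2) $ i = 0" and k_j: "t (i+2) $ (i+1) = 0"
    using coeffs by blast+
  have "t i $ (i+1) *s p = (t i $ i - t (i+2) $ (i+2)) *s q"
    using cross[of i "i+2"] k_j unfolding prd_i prd_k by (simp add: vec_eq_iff algebra_simps)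
  then have i_j: "t i $ (i+1) = 0" and i_i: "t i $ i = t (i+2) $ (i+2)"
    using coeffs by (metis, metis eq_iff_diff_eq_0)
  have "(t (i+2) $ (i+2) - t (i+1) $ (i+1)) *s p = (- t (i+1) $ i) *s q"
    using cross[of "i+1" "i+2"] k_i unfolding prd_j prd_k by (simp add: vec_eq_iff algebra_simps)
  then have j_j: "t (i+1) $ (i+1) = t (i+2) $ (i+2)" and j_i: "t (i+1) $ i = 0"
    using coeffs by (metis eq_iff_diff_eq_0, metis neg_equal_0_iff_equal)
  have "0 *s p = t i $ (i+2) *s q"
    using self[of i] i_j unfolding prd_i by simp
  then have i_k: "t i $ (i+2) = 0"
    using coeffs by blast
  have "t (i+1) $ (i+2) *s p = 0 *s q"
    using self[of "i+1"] j_i unfolding prd_j by simp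
  then have j_k: "t (i+1) $ (i+2) = 0"
    using coeffs by blast
  have "t m $ n = (t (i+2) $ (i+2) *s axis m 1) $ n" for m n
    using exhaust_3_cyclic[of m i] exhaust_3_cyclic[of n i]
    by (elim disjE) (simp_all add: axis_def k_i k_j i_j i_i j_j j_i i_k j_k)
  then show ?thesis
    unfolding t_def vec_eq_iff by blast
qed

lemma weak_multiplier_scalar:
  assumes two: "(2::'k) \<noteq> 0" and T: "weak_multiplier prd T"
  shows "\<exists>a. T = (\<lambda>x. a *s x)"
proof -
  obtain a where axes: "\<And>m. T (axis m 1) = a *s axis m 1"
    using weak_multiplier_on_axes[OF two T] by blast
  have "T x - a *s x = 0" for x
  proof (rule annihilator_eq_0)
    fix m
    have "prd (axis m 1) (T x) = a *s prd (axis m 1) x"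
      using T axes unfolding weak_multiplier_def by (simp add: scale_left)
    then show "prd (axis m 1) (T x - a *s x) = 0"
      by (simp add: diff_right scale_right)
  qed
  then show ?thesis by auto
qed

end

theorem theorem7p2:
  fixes prd :: "'k::field ^ 3 \<Rightarrow> 'k ^ 3 \<Rightarrow> 'k ^ 3"
  assumes "(2::'k) \<noteq> 0"
    and "bilinear_prod prd"
    and "zeropotent prd"
    and "struct_rank_ge2 prd"
  shows "M_set prd = M'_set prd \<and> M'_set prd = LM_set prd \<and> LM_set prd = LM'_set prd \<and>
         LM'_set prd = {(\<lambda>x. a *s x) | a. True}"
proof -
  interpret zeropotent_algebra3_rank2 prd
    using assms(2-4) by unfold_locales
  let ?S = "{(\<lambda>x. a *s x) | a. True}"
  have "?S \<subseteq> LM_set prd"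
    using scalar_multiplier vec.linear_scale_self by (auto simp: LM_set_def)
  moreover have "M'_set prd \<subseteq> ?S"
    using weak_multiplier_scalar[OF assms(1)] by (auto simp: M'_set_def)
  moreover have "LM_set prd \<subseteq> M_set prd" "LM_set prd \<subseteq> LM'_set prd"
    and "M_set prd \<subseteq> M'_set prd" "LM'_set prd \<subseteq> M'_set prd"
    by (auto simp: LM_set_def M_set_def LM'_set_def M'_set_def multiplier_imp_weak_multiplier)
  ultimately have "M_set prd = ?S" "M'_set prd = ?S" "LM_set prd = ?S" "LM'_set prd = ?S"
    by (meson order_trans subset_antisym)+
  then show ?thesis by simp
qed

end
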